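(* Let $n\ge3$ and $2\le t\le\lceil n/2\rceil$, and let $\mathsf{X}=\mathsf{C}_n(t;i,i+1)$ with $1\le i<t$. Then \[F_2(\mathsf{X})=\begin{cases} n-1 & \text{if } i=1 \text{ and } t=2,\\ (2t-3)(n-t+1) & \text{otherwise.}\end{cases}\]
   Context: $\mathsf{C}_n(t;i,j)$ ($i<j$) denotes the $n$-cycle with vertices $v_1,\dots,v_n$ in cyclic order (edges $v_kv_{k+1}$ and $v_nv_1$), with marked (ramified) vertices $v_1$ and $v_t$, together with one additional edge between $v_i$ and $v_j$. $F_2$ is the number of spanning forests consisting of two trees, one containing $v_1$ and the other containing $v_t$. *)

theory Defs
  imports Complex_Main
begin

text \<open>Finite multigraphs: a vertex set V, an edge set E (edges are distinct objects,
  so parallel edges are allowed), and an endpoint map ends.\<close>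

definition adj_rel :: "('e \<Rightarrow> 'v \<times> 'v) \<Rightarrow> 'e set \<Rightarrow> ('v \<times> 'v) set" where
  "adj_rel ends F = {(u, v). \<exists>e\<in>F. ends e = (u, v) \<or> ends e = (v, u)}"

definition connected_in :: "('e \<Rightarrow> 'v \<times> 'v) \<Rightarrow> 'e set \<Rightarrow> 'v \<Rightarrow> 'v \<Rightarrow> bool" where
  "connected_in ends F u v \<longleftrightarrow> (u, v) \<in> (adj_rel ends F)\<^sup>*"

definition acyclic_edges :: "('e \<Rightarrow> 'v \<times> 'v) \<Rightarrow> 'e set \<Rightarrow> bool" where
  "acyclic_edges ends F \<longleftrightarrow>
     (\<forall>e\<in>F. \<not> connected_in ends (F - {e}) (fst (ends e)) (snd (ends e)))"

definition two_rooted_forests ::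
  "'v set \<Rightarrow> 'e set \<Rightarrow> ('e \<Rightarrow> 'v \<times> 'v) \<Rightarrow> 'v \<Rightarrow> 'v \<Rightarrow> 'e set set" where
  "two_rooted_forests V E ends r1 r2 =
     {F. F \<subseteq> E \<and> acyclic_edges ends F \<and>
         (\<forall>v\<in>V. connected_in ends F v r1 \<or> connected_in ends F v r2) \<and>
         \<not> connected_in ends F r1 r2}"

text \<open>The graph C_n(t;i,j): vertices 1..n (v_k is k), cycle edges k = 1..n joining
  k and k+1 (edge n joins n and 1), plus the extra edge 0 joining i and j.\<close>
definition Cn_ends :: "nat \<Rightarrow> nat \<Rightarrow> nat \<Rightarrow> nat \<Rightarrow> nat \<times> nat" where
  "Cn_ends n i j k = (if k = 0 then (i, j) else (k, if k = n then 1 else k + 1))"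

definition F2_Cn :: "nat \<Rightarrow> nat \<Rightarrow> nat \<Rightarrow> nat \<Rightarrow> nat" where
  "F2_Cn n t i j = card (two_rooted_forests {1..n} {0..n} (Cn_ends n i j) 1 t)"

end

theory Submission
  imports Defs
begin

(* A two-rooted spanning forest of C_n(t;i,i+1) keeps n - 2 of the n + 1 edges. The arc of the
   cycle from v_1 to v_t and the arc from v_t back to v_1 must each be cut exactly once, and at
   most one of the two parallel edges joining v_i and v_(i+1) survives. Hence the forests are the
   complements of the triples {a, b, c} with a on the first arc, b on the second and c one of the
   two parallel edges, where c has to be the extra edge when a = i. There are
   (2 (t - 2) + 1) (n - t + 1) = (2t - 3)(n - t + 1) such triples, which is n - 1 when i = 1, t = 2. *)

lemma connected_in_refl: "connected_in ends F u u"
  by (simp add: connected_in_def)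

lemma connected_in_trans:
  "connected_in ends F u v \<Longrightarrow> connected_in ends F v w \<Longrightarrow> connected_in ends F u w"
  unfolding connected_in_def by (rule rtrancl_trans)

lemma connected_in_sym: "connected_in ends F u v \<Longrightarrow> connected_in ends F v u"
proof -
  have "sym (adj_rel ends F)"
    unfolding adj_rel_def sym_def by auto
  then show "connected_in ends F u v \<Longrightarrow> connected_in ends F v u"
    unfolding connected_in_def by (meson symD sym_rtrancl)
qed

lemma connected_in_edge: "e \<in> F \<Longrightarrow> ends e = (u, v) \<Longrightarrow> connected_in ends F u v"
  unfolding connected_in_def adj_rel_def by (rule r_into_rtrancl) auto

lemma connected_in_closed:
  assumes closed: "\<And>x y. (x, y) \<in> adj_rel ends F \<Longrightarrow> x \<in> S \<Longrightarrow> y \<in> S"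
    and "connected_in ends F u v" and "u \<in> S"
  shows "v \<in> S"
proof -
  from assms(2) have "(u, v) \<in> (adj_rel ends F)\<^sup>*"
    unfolding connected_in_def .
  then show ?thesis
    by (induction rule: rtrancl_induct) (use assms(3) closed in blast)+
qed

context
  fixes n i :: nat
begin

abbreviation cyc_ends :: "nat \<Rightarrow> nat \<times> nat" where
  "cyc_ends \<equiv> Cn_ends n i (i + 1)"

definition succ_linked :: "nat set \<Rightarrow> nat \<Rightarrow> bool" where
  "succ_linked F k \<longleftrightarrow> k \<in> F \<or> (k = i \<and> 0 \<in> F)"

lemma succ_linked_Diff: "succ_linked (F - X) k \<Longrightarrow> succ_linked F k"
  unfolding succ_linked_def by auto

lemma connected_along_arc:
  assumes "1 \<le> u" "u \<le> v" "v \<le> n" "\<forall>k\<in>{u..<v}. succ_linked F k"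
  shows "connected_in cyc_ends F u v"
  using assms(2-4)
proof (induction v rule: dec_induct)
  case base
  show ?case by (rule connected_in_refl)
next
  case (step v)
  have "connected_in cyc_ends F v (Suc v)"
  proof -
    have "v \<in> F \<or> (v = i \<and> 0 \<in> F)"
      using step.prems step.hyps(1,2) unfolding succ_linked_def by auto
    then show ?thesis
    proof
      assume "v \<in> F"
      then show ?thesis
        using step.prems assms(1) step.hyps(1)
        by (intro connected_in_edge[of v]) (auto simp: Cn_ends_def)
    next
      assume "v = i \<and> 0 \<in> F"
      then show ?thesis
        by (intro connected_in_edge[of 0]) (auto simp: Cn_ends_def)
    qed
  qed
  with step show ?case
    using connected_in_trans by fastforce
qed

lemma arc_closed:
  assumes "1 \<le> p" "p < q" "q \<le> n" "\<not> succ_linked F p" "\<not> succ_linked F q"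
    and "connected_in cyc_ends F u v" "u \<in> {p<..q}"
  shows "v \<in> {p<..q}"
proof (rule connected_in_closed[OF _ assms(6,7)])
  fix x y
  assume "(x, y) \<in> adj_rel cyc_ends F" and x: "x \<in> {p<..q}"
  then obtain e where e: "e \<in> F" "cyc_ends e = (x, y) \<or> cyc_ends e = (y, x)"
    unfolding adj_rel_def by auto
  show "y \<in> {p<..q}"
  proof (cases "e = 0")
    case True
    then have "p \<noteq> i" "q \<noteq> i"
      using assms(4,5) e(1) unfolding succ_linked_def by auto
    then show ?thesis
      using e(2) True x by (auto simp: Cn_ends_def)
  next
    case False
    have "e \<noteq> p" "e \<noteq> q"
      using e(1) assms(4,5) unfolding succ_linked_def by auto
    then show ?thesis
      using False e(2) assms(1-3) x by (auto simp: Cn_ends_def split: if_splits)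
  qed
qed

lemma not_connected_across_arc:
  assumes "1 \<le> p" "p < q" "q \<le> n" "\<not> succ_linked F p" "\<not> succ_linked F q"
    and "u \<in> {p<..q}" "v \<notin> {p<..q}"
  shows "\<not> connected_in cyc_ends F u v"
  using arc_closed[OF assms(1-5)] assms(6,7) by blast

lemma two_cuts_separate_succ:
  assumes "k \<in> {1..n}" "d \<in> {1..n}" "d \<noteq> k" "\<not> succ_linked F k" "\<not> succ_linked F d"
  shows "\<not> connected_in cyc_ends F k (if k = n then 1 else k + 1)"
proof (cases "d < k")
  case True
  then show ?thesis
    using not_connected_across_arc[of d k F k] assms by auto
next
  case False
  then have "\<not> connected_in cyc_ends F (k + 1) k"
    using not_connected_across_arc[of k d F "k + 1" k] assms by auto
  then show ?thesis
    using False assms(2,3) connected_in_sym by fastforce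
qed

lemma parallel_edges_not_both:
  assumes "acyclic_edges cyc_ends F" "1 \<le> i" "i < n"
  shows "\<not> (0 \<in> F \<and> i \<in> F)"
proof
  assume both: "0 \<in> F \<and> i \<in> F"
  then have "connected_in cyc_ends (F - {0}) i (i + 1)"
    using assms(2,3) by (intro connected_in_edge[of i]) (auto simp: Cn_ends_def)
  then show False
    using assms(1) both unfolding acyclic_edges_def by (auto simp: Cn_ends_def)
qed

context
  fixes t :: nat
  assumes n3: "3 \<le> n" and t2: "2 \<le> t" and tn: "t \<le> n" and i1: "1 \<le> i" and it: "i < t"
begin

abbreviation forests :: "nat set set" where
  "forests \<equiv> two_rooted_forests {1..n} {0..n} cyc_ends 1 t"

definition cut_triples :: "(nat \<times> nat \<times> nat) set" where
  "cut_triples = {(a, b, c). a \<in> {1..<t} \<and> b \<in> {t..n} \<and> c \<in> {0, i} \<and> (a = i \<longrightarrow> c = 0)}"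

lemma spanning_if_linked_outside_two_cuts:
  assumes "1 \<le> a" "a < t" "t \<le> b" "b \<le> n"
    and linked: "\<forall>k\<in>{1..n} - {a, b}. succ_linked F k" and v: "v \<in> {1..n}"
  shows "connected_in cyc_ends F v 1 \<or> connected_in cyc_ends F v t"
proof -
  consider "v \<le> a" | "a < v" "v \<le> t" | "t \<le> v" "v \<le> b" | "b < v"
    by linarith
  then show ?thesis
  proof cases
    case 1
    then have "connected_in cyc_ends F 1 v"
      using assms by (intro connected_along_arc) auto
    then show ?thesis by (blast intro: connected_in_sym)
  next
    case 2
    then have "connected_in cyc_ends F v t"
      using assms tn by (intro connected_along_arc) auto
    then show ?thesis ..
  next
    case 3
    then have "connected_in cyc_ends F t v"
      using assms t2 by (intro connected_along_arc) auto
    then show ?thesis by (blast intro: connected_in_sym)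
  next
    case 4
    then have "connected_in cyc_ends F v n"
      using assms by (intro connected_along_arc) auto
    moreover have "n \<in> F"
      using linked 4 v it tn assms(1-4) unfolding succ_linked_def by auto
    then have "connected_in cyc_ends F n 1"
      using n3 by (intro connected_in_edge[of n]) (auto simp: Cn_ends_def)
    ultimately show ?thesis
      by (blast intro: connected_in_trans)
  qed
qed

lemma complement_of_cut_triple_in_forests:
  assumes "(a, b, c) \<in> cut_triples"
  shows "{0..n} - {a, b, c} \<in> forests"
proof -
  define F where "F = {0..n} - {a, b, c}"
  have abc: "1 \<le> a" "a < t" "t \<le> b" "b \<le> n" "c = 0 \<or> c = i" "a = i \<longrightarrow> c = 0"
    using assms unfolding cut_triples_def by auto
  have linked_iff: "succ_linked F k \<longleftrightarrow> k \<noteq> a \<and> k \<noteq> b" if "k \<in> {1..n}" for k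
    using that abc i1 it unfolding F_def succ_linked_def by auto
  then have cut_a: "\<not> succ_linked F a" and cut_b: "\<not> succ_linked F b"
    and linked: "\<forall>k\<in>{1..n} - {a, b}. succ_linked F k"
    using abc tn by auto
  have "acyclic_edges cyc_ends F"
    unfolding acyclic_edges_def
  proof
    fix e
    assume e: "e \<in> F"
    define k where "k = (if e = 0 then i else e)"
    \<comment> \<open>e joins k to its successor, and both k and a are cuts of F - {e}\<close>
    have ends_e: "cyc_ends e = (k, if k = n then 1 else k + 1)"
      using it tn by (auto simp: Cn_ends_def k_def)
    have "k \<in> {1..n}" "k \<noteq> a"
      using e abc i1 it tn unfolding F_def k_def by auto
    moreover have "\<not> succ_linked (F - {e}) k"
      using e abc i1 unfolding F_def k_def succ_linked_def by auto
    moreover have "\<not> succ_linked (F - {e}) a"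
      using cut_a succ_linked_Diff by blast
    ultimately show "\<not> connected_in cyc_ends (F - {e}) (fst (cyc_ends e)) (snd (cyc_ends e))"
      using two_cuts_separate_succ[of k a "F - {e}"] abc tn unfolding ends_e by auto
  qed
  moreover have "connected_in cyc_ends F v 1 \<or> connected_in cyc_ends F v t" if "v \<in> {1..n}" for v
    using spanning_if_linked_outside_two_cuts[OF abc(1-4) linked that] .
  moreover have "\<not> connected_in cyc_ends F 1 t"
    using not_connected_across_arc[OF abc(1) _ abc(4) cut_a cut_b, of t 1] abc
      connected_in_sym[of cyc_ends F 1 t] by auto
  moreover have "F \<subseteq> {0..n}"
    unfolding F_def by blast
  ultimately have "F \<in> forests"
    unfolding two_rooted_forests_def by blast
  then show ?thesis
    unfolding F_def .
qed

text \<open>The arc between two cuts must contain a root, and it never contains 1.\<close>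
lemma forest_cuts_straddle_root:
  assumes "F \<in> forests" "1 \<le> p" "p < q" "q \<le> n" "\<not> succ_linked F p" "\<not> succ_linked F q"
  shows "p < t \<and> t \<le> q"
proof -
  have "connected_in cyc_ends F q 1 \<or> connected_in cyc_ends F q t"
    using assms(1-4) unfolding two_rooted_forests_def by auto
  then show ?thesis
    using not_connected_across_arc[OF assms(2-6), of q] assms(2,3) by auto
qed

lemma forest_cuts_same_side_eq:
  assumes "F \<in> forests" "p \<in> {1..n}" "q \<in> {1..n}" "\<not> succ_linked F p" "\<not> succ_linked F q"
    and "p < t \<longleftrightarrow> q < t"
  shows "p = q"
  using forest_cuts_straddle_root[of F p q] forest_cuts_straddle_root[of F q p] assms
  by (cases p q rule: linorder_cases) auto

lemma forest_cut_before_root: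
  assumes "F \<in> forests"
  shows "\<exists>a\<in>{1..<t}. \<not> succ_linked F a"
proof (rule ccontr)
  assume "\<not> (\<exists>a\<in>{1..<t}. \<not> succ_linked F a)"
  then have "connected_in cyc_ends F 1 t"
    using t2 tn by (intro connected_along_arc) auto
  then show False
    using assms unfolding two_rooted_forests_def by blast
qed

lemma forest_cut_after_root:
  assumes "F \<in> forests"
  shows "\<exists>b\<in>{t..n}. b \<notin> F"
proof (rule ccontr)
  assume no_cut: "\<not> (\<exists>b\<in>{t..n}. b \<notin> F)"
  then have "connected_in cyc_ends F t n"
    using t2 tn by (intro connected_along_arc) (auto simp: succ_linked_def)
  moreover have "connected_in cyc_ends F n 1"
    using no_cut n3 tn by (intro connected_in_edge[of n]) (auto simp: Cn_ends_def)
  ultimately have "connected_in cyc_ends F 1 t"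
    by (meson connected_in_sym connected_in_trans)
  then show False
    using assms unfolding two_rooted_forests_def by blast
qed

lemma forest_is_complement_of_cut_triple:
  assumes F: "F \<in> forests"
  shows "\<exists>(a, b, c)\<in>cut_triples. F = {0..n} - {a, b, c}"
proof -
  have FE: "F \<subseteq> {0..n}" and par: "\<not> (0 \<in> F \<and> i \<in> F)"
    using F parallel_edges_not_both i1 it tn unfolding two_rooted_forests_def by auto
  obtain a where a: "a \<in> {1..<t}" "\<not> succ_linked F a"
    using forest_cut_before_root[OF F] by blast
  obtain b where b: "b \<in> {t..n}" "b \<notin> F"
    using forest_cut_after_root[OF F] by blast
  have cut_b: "\<not> succ_linked F b"
    using b it unfolding succ_linked_def by auto
  define c where "c = (if 0 \<in> F then i else 0)"
  have "(a, b, c) \<in> cut_triples"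
    using a b unfolding cut_triples_def c_def succ_linked_def by auto
  moreover have "F = {0..n} - {a, b, c}"
  proof (intro equalityI subsetI)
    fix x
    assume "x \<in> F"
    then show "x \<in> {0..n} - {a, b, c}"
      using FE a b par i1 unfolding c_def succ_linked_def by (cases "x = 0") auto
  next
    fix x
    assume x: "x \<in> {0..n} - {a, b, c}"
    show "x \<in> F"
    proof (rule ccontr)
      assume xF: "x \<notin> F"
      have "x \<noteq> 0" "\<not> (x = i \<and> 0 \<in> F)"
        using x xF c_def by (cases "0 \<in> F"; force)+
      then have "x \<in> {1..n}" "\<not> succ_linked F x"
        using x xF unfolding succ_linked_def by auto
      then show False
        using forest_cuts_same_side_eq[OF F _ _ _ a(2), of x]
          forest_cuts_same_side_eq[OF F _ _ _ cut_b, of x] x a b tn by auto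
    qed
  qed
  ultimately show ?thesis by blast
qed

lemma forests_eq_image_cut_triples:
  "forests = (\<lambda>(a, b, c). {0..n} - {a, b, c}) ` cut_triples"
  using forest_is_complement_of_cut_triple complement_of_cut_triple_in_forests by fastforce

lemma inj_on_complement_cut_triples:
  "inj_on (\<lambda>(a, b, c). {0..n} - {a, b, c}) cut_triples"
proof (rule inj_onI)
  fix x y
  assume "x \<in> cut_triples" "y \<in> cut_triples"
    and "(\<lambda>(a, b, c). {0..n} - {a, b, c}) x = (\<lambda>(a, b, c). {0..n} - {a, b, c}) y"
  moreover obtain a b c a' b' c' where xy: "x = (a, b, c)" "y = (a', b', c')"
    by (cases x, cases y) auto
  ultimately have abc: "(a, b, c) \<in> cut_triples" "(a', b', c') \<in> cut_triples"
    and eq: "{0..n} - {a, b, c} = {0..n} - {a', b', c'}"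
    by auto
  have "{a, b, c} \<subseteq> {0..n}" "{a', b', c'} \<subseteq> {0..n}"
    using abc it tn unfolding cut_triples_def by auto
  with eq have "{a, b, c} = {a', b', c'}"
    by blast
  then have "a \<in> {a', b', c'}" "b \<in> {a', b', c'}" "c \<in> {a', b', c'}"
    "a' \<in> {a, b, c}" "b' \<in> {a, b, c}" "c' \<in> {a, b, c}"
    by auto
  then show "x = y"
    using abc it i1 unfolding xy cut_triples_def by auto
qed

lemma card_cut_triples: "card cut_triples = (2 * t - 3) * (n - t + 1)"
proof -
  have split: "cut_triples = ({i} \<times> {t..n} \<times> {0}) \<union> (({1..<t} - {i}) \<times> {t..n} \<times> {0, i})"
    unfolding cut_triples_def using i1 it by auto
  have "card ({1..<t} - {i}) = t - 2"
    using i1 it by (simp add: card_Diff_singleton)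
  moreover have "card {0, i} = 2"
    using i1 by simp
  ultimately have "card cut_triples = (n - t + 1) + (t - 2) * ((n - t + 1) * 2)"
    unfolding split by (subst card_Un_disjoint) (auto simp: card_cartesian_product tn Suc_diff_le)
  also have "\<dots> = (2 * t - 3) * (n - t + 1)"
  proof -
    obtain s where "t = s + 2"
      using t2 le_Suc_ex by (metis add.commute)
    then show ?thesis
      by (simp add: algebra_simps)
  qed
  finally show ?thesis .
qed

lemma card_forests: "card forests = (2 * t - 3) * (n - t + 1)"
  unfolding forests_eq_image_cut_triples
  by (simp add: card_image[OF inj_on_complement_cut_triples] card_cut_triples)

end

end

theorem lemma7p5:
  fixes n t i :: nat
  assumes "n \<ge> 3" and "2 \<le> t" and "t \<le> nat (ceiling (real n / 2))"
    and "1 \<le> i" and "i < t"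
  shows "F2_Cn n t i (i + 1) =
    (if i = 1 \<and> t = 2 then n - 1 else (2 * t - 3) * (n - t + 1))"
proof -
  have "ceiling (real n / 2) \<le> int n"
    by (simp add: ceiling_le_iff)
  then have "t \<le> n"
    using assms(3) by linarith
  then have "F2_Cn n t i (i + 1) = (2 * t - 3) * (n - t + 1)"
    unfolding F2_Cn_def using card_forests assms(1,2,4,5) by blast
  then show ?thesis
    using assms(1) by auto
qed

end
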